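(* Let $d>0$, $r_C>0$, and let $\mathcal{C}=\{(x,y,r_C): x^2+y^2\le d^2\}$ with unit normal $\mathbf{e}_z$. For every integer $l\ge1$, $$v_{l,0}:=\int_{\mathcal{C}}\frac{\boldsymbol{\nu}_{l0}(\theta,\phi)}{R^{l+2}}\cdot\mathbf{e}_z\,dS=2\pi\sqrt{\frac{2l+1}{4\pi}}\left(-(l+1)\,r_C\,\gamma_{1,l+3,0,l}+\gamma_{3,l+4,1,l}\right),$$ where for non-negative integers $a,b,u,v$ $$\gamma_{a,b,u,v}:=\int_0^d\frac{\zeta^a}{(\zeta^2+r_C^2)^{b/2}}\,P_v^{0,u}\!\left(\frac{r_C}{\sqrt{\zeta^2+r_C^2}}\right)d\zeta,$$ and $P_v^{0,u}$ denotes the $u$-th derivative of the Legendre polynomial $P_v^0$.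
   Context: $(R,\theta,\phi)$ are spherical coordinates of $(x,y,r_C)$: $R=\sqrt{x^2+y^2+r_C^2}$, $\theta=\arccos(r_C/R)$, $\phi$ the azimuthal angle of $(x,y)$; $\mathbf{e}_R,\mathbf{e}_\theta,\mathbf{e}_\phi$ the spherical orthonormal frame. $Y_{lm}(\theta,\phi)=\sqrt{\frac{2l+1}{4\pi}\frac{(l-m)!}{(l+m)!}}\,e^{im\phi}P_l^m(\cos\theta)$ with $P_l^m(x)=\frac{(-1)^m}{2^l l!}(1-x^2)^{m/2}\frac{d^{m+l}}{dx^{m+l}}(x^2-1)^l$ (so $P_l^0$ is the Legendre polynomial), and $\boldsymbol{\nu}_{lm}=-(l+1)Y_{lm}\mathbf{e}_R+\frac{\partial Y_{lm}}{\partial\theta}\mathbf{e}_\theta+\frac{imY_{lm}}{\sin\theta}\mathbf{e}_\phi$. *)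

theory Defs
  imports "HOL-Analysis.Analysis"
begin

definition assoc_legendre :: "nat \<Rightarrow> int \<Rightarrow> real \<Rightarrow> real" where
  "assoc_legendre l m x =
     (-1) powi m / (2 ^ l * fact l) * (sqrt (1 - x\<^sup>2) powi m)
     * (deriv ^^ nat (m + int l)) (\<lambda>t. (t\<^sup>2 - 1) ^ l) x"

definition sph_Y :: "nat \<Rightarrow> int \<Rightarrow> real \<Rightarrow> real \<Rightarrow> complex" where
  "sph_Y l m \<theta> \<phi> =
     complex_of_real (sqrt ((2 * real l + 1) / (4 * pi)
        * fact (nat (int l - m)) / fact (nat (int l + m))))
     * exp (\<i> * of_int m * of_real \<phi>)
     * complex_of_real (assoc_legendre l m (cos \<theta>))"

definition e_R :: "real \<Rightarrow> real \<Rightarrow> real^3" where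
  "e_R \<theta> \<phi> = vector [sin \<theta> * cos \<phi>, sin \<theta> * sin \<phi>, cos \<theta>]"
definition e_theta :: "real \<Rightarrow> real \<Rightarrow> real^3" where
  "e_theta \<theta> \<phi> = vector [cos \<theta> * cos \<phi>, cos \<theta> * sin \<phi>, - sin \<theta>]"
definition e_phi :: "real \<Rightarrow> real \<Rightarrow> real^3" where
  "e_phi \<theta> \<phi> = vector [- sin \<phi>, cos \<phi>, 0]"
definition e_z :: "real^3" where
  "e_z = vector [0, 0, 1]"

definition cvec :: "complex \<Rightarrow> real^3 \<Rightarrow> complex^3" where
  "cvec c v = (\<chi> i. c * complex_of_real (v $ i))"

text \<open>Bilinear (non-conjugating) dot product of a complex vector with a real vector.\<close>
definition cdot :: "complex^3 \<Rightarrow> real^3 \<Rightarrow> complex" where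
  "cdot u v = (\<Sum>i\<in>UNIV. u $ i * complex_of_real (v $ i))"

definition nu :: "nat \<Rightarrow> int \<Rightarrow> real \<Rightarrow> real \<Rightarrow> complex^3" where
  "nu l m \<theta> \<phi> =
     cvec (- of_nat (l + 1) * sph_Y l m \<theta> \<phi>) (e_R \<theta> \<phi>)
   + cvec (vector_derivative (\<lambda>t. sph_Y l m t \<phi>) (at \<theta>)) (e_theta \<theta> \<phi>)
   + cvec (\<i> * of_int m * sph_Y l m \<theta> \<phi> / complex_of_real (sin \<theta>)) (e_phi \<theta> \<phi>)"

definition sphR :: "real \<Rightarrow> real \<Rightarrow> real \<Rightarrow> real" where
  "sphR rC x y = sqrt (x\<^sup>2 + y\<^sup>2 + rC\<^sup>2)"
definition sphTheta :: "real \<Rightarrow> real \<Rightarrow> real \<Rightarrow> real" where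
  "sphTheta rC x y = arccos (rC / sphR rC x y)"
definition sphPhi :: "real \<Rightarrow> real \<Rightarrow> real" where
  "sphPhi x y = Arg (Complex x y)"

definition gam :: "real \<Rightarrow> real \<Rightarrow> nat \<Rightarrow> nat \<Rightarrow> nat \<Rightarrow> nat \<Rightarrow> real" where
  "gam d rC a b u v =
     integral {0..d} (\<lambda>\<zeta>. \<zeta> ^ a / (\<zeta>\<^sup>2 + rC\<^sup>2) powr (real b / 2)
        * (deriv ^^ u) (assoc_legendre v 0) (rC / sqrt (\<zeta>\<^sup>2 + rC\<^sup>2)))"

end

theory Submission
  imports Defs "HOL-Computational_Algebra.Polynomial"
begin

text \<open>
  For m = 0 the azimuthal part of nu_l0 vanishes and, since d/dtheta P_l(cos theta) =
  -sin theta P_l'(cos theta) and e_theta . e_z = -sin theta, its e_z-component is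
  c (-(l+1) cos theta P_l(cos theta) + sin^2 theta P_l'(cos theta)) with c = sqrt((2l+1)/(4 pi)).
  On the plane z = r_C we have cos theta = r_C/R and sin theta = rho/R, where rho = |(x,y)|,
  so the integrand depends on rho alone. The push-forward of Lebesgue measure on the disk
  under the norm has density 2 pi rho on [0,d], which turns the surface integral into
  2 pi times the integral over [0,d] of rho F(rho); and rho F(rho) splits into
  -(l+1) r_C times the integrand of gamma_{1,l+3,0,l} plus the integrand of gamma_{3,l+4,1,l}.
\<close>

lemma measure_eqI_atMost:
  fixes M N :: "real measure"
  assumes sets: "sets M = sets borel" "sets N = sets borel"
  assumes fin: "\<And>x. emeasure M {..x} < \<infinity>"
  assumes eq: "\<And>x. emeasure M {..x} = emeasure N {..x}"
  shows "M = N"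
proof (rule measure_eqI_generator_eq_countable)
  let ?E = "range (\<lambda>a::real. {..a})"
  show "Int_stable ?E"
    by (auto simp: Int_stable_def)
  show "?E \<subseteq> Pow UNIV" "sets M = sigma_sets UNIV ?E" "sets N = sigma_sets UNIV ?E"
    unfolding sets borel_eq_atMost by auto
  show "(\<lambda>a. {..a}) ` \<rat> \<subseteq> ?E" "(\<Union>a\<in>\<rat>. {..a::real}) = UNIV"
    "\<And>A. A \<in> (\<lambda>a. {..a}) ` \<rat> \<Longrightarrow> emeasure M A \<noteq> \<infinity>"
    using fin Rats_no_top_le by (auto simp: less_top)
qed (auto intro: eq countable_rat)

lemma distr_norm_cball_eq_density:
  fixes d :: real assumes "d > 0"
  shows "distr (density lborel (indicator (cball (0::real \<times> real) d))) borel norm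
       = density lborel (\<lambda>r. ennreal (2 * pi * r * indicator {0..d} r))"
proof (rule measure_eqI_atMost)
  let ?disk = "distr (density lborel (indicator (cball (0::real \<times> real) d))) borel norm"
  let ?radial = "density lborel (\<lambda>r. ennreal (2 * pi * r * indicator {0..d} r))"
  fix x :: real
  have "closed (norm -` {..x} :: (real \<times> real) set)"
    by (intro closed_vimage continuous_on_norm_id) simp
  then have "emeasure ?disk {..x} = emeasure lborel (cball (0::real \<times> real) d \<inter> norm -` {..x})"
    by (simp add: emeasure_distr, subst emeasure_density)
      (auto simp: borel_closed mult.commute simp flip: indicator_inter_arith
        intro!: borel_measurable_indicator)
  also have "cball 0 d \<inter> norm -` {..x} = (if x < 0 then {} else cball (0::real \<times> real) (min x d))"
    by (auto simp: dist_0_norm) (metis norm_ge_zero order_trans not_le)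
  finally have disk: "emeasure ?disk {..x} = (if x < 0 then 0 else ennreal (pi * (min x d)\<^sup>2))"
    using \<open>d > 0\<close> by (auto simp: emeasure_cball unit_ball_vol_2 power2_eq_square)
  have "((\<lambda>r. pi * r\<^sup>2) has_real_derivative 2 * pi * r) (at r within {0..min x d})" for r
    by (auto intro!: derivative_eq_intros)
  then have "((\<lambda>r. 2 * pi * r) has_integral pi * (min x d)\<^sup>2) {0..min x d}" if "x \<ge> 0"
    using fundamental_theorem_of_calculus[of 0 "min x d" "\<lambda>r. pi * r\<^sup>2" "\<lambda>r. 2 * pi * r"]
      that \<open>d > 0\<close> by (simp add: has_real_derivative_iff_has_vector_derivative)
  then have "(\<integral>\<^sup>+ r. ennreal (2 * pi * r) * indicator {0..min x d} r \<partial>lborel)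
      = ennreal (pi * (min x d)\<^sup>2)" if "x \<ge> 0"
    using that by (intro nn_integral_has_integral_lebesgue') auto
  moreover have "emeasure ?radial {..x}
      = (\<integral>\<^sup>+ r. ennreal (2 * pi * r) * indicator (if x < 0 then {} else {0..min x d}) r \<partial>lborel)"
    by (subst emeasure_density, simp, simp, intro nn_integral_cong) (auto simp: indicator_def)
  ultimately have "emeasure ?radial {..x} = (if x < 0 then 0 else ennreal (pi * (min x d)\<^sup>2))"
    by simp
  with disk show "emeasure ?disk {..x} = emeasure ?radial {..x}" and "emeasure ?disk {..x} < \<infinity>"
    by simp_all
qed auto

lemma integral_cball_radial:
  fixes g :: "real \<Rightarrow> 'b::euclidean_space"
  assumes "d > 0" and g: "continuous_on UNIV g"
  shows "integral (cball (0::real \<times> real) d) (\<lambda>p. g (norm p))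
       = (2 * pi) *\<^sub>R integral {0..d} (\<lambda>r. r *\<^sub>R g r)"
proof -
  have g_borel: "g \<in> borel_measurable borel"
    using g by (rule borel_measurable_continuous_onI)
  have "continuous_on (cball 0 d) (\<lambda>p::real \<times> real. g (norm p))"
    by (rule continuous_on_compose2[OF g continuous_on_norm_id]) auto
  then have "set_integrable lborel (cball 0 d) (\<lambda>p::real \<times> real. g (norm p))"
    unfolding set_integrable_def by (intro borel_integrable_compact) auto
  then have "integral (cball 0 d) (\<lambda>p::real \<times> real. g (norm p))
      = (LINT p:cball 0 d|lborel. g (norm (p::real \<times> real)))"
    by (rule set_borel_integral_eq_integral(2)[symmetric])
  also have "\<dots> = integral\<^sup>L (density lborel (\<lambda>p. ennreal (indicator (cball (0::real \<times> real) d) p)))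
      (\<lambda>p. g (norm p))"
    using g_borel unfolding set_lebesgue_integral_def
    by (subst integral_density) (auto simp: borel_closed intro!: borel_measurable_indicator)
  also have "\<dots> = integral\<^sup>L (distr (density lborel (indicator (cball (0::real \<times> real) d))) borel norm) g"
    using g_borel by (simp add: integral_distr ennreal_indicator)
  also have "\<dots> = integral\<^sup>L (density lborel (\<lambda>r. ennreal (2 * pi * r * indicator {0..d} r))) g"
    by (simp add: distr_norm_cball_eq_density \<open>d > 0\<close>)
  also have "\<dots> = (LINT r:{0..d}|lborel. (2 * pi * r) *\<^sub>R g r)"
    using g_borel by (subst integral_density)
      (auto simp: set_lebesgue_integral_def indicator_def intro!: Bochner_Integration.integral_cong AE_I2)
  also have "\<dots> = integral {0..d} (\<lambda>r. (2 * pi * r) *\<^sub>R g r)"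
    unfolding set_integrable_def
    by (intro set_borel_integral_eq_integral(2)[unfolded set_integrable_def]
        borel_integrable_compact continuous_intros continuous_on_subset[OF g]) auto
  also have "\<dots> = (2 * pi) *\<^sub>R integral {0..d} (\<lambda>r. r *\<^sub>R g r)"
    by (simp add: scaleR_scaleR flip: integral_cmul)
  finally show ?thesis .
qed

lemma deriv_poly: "deriv (poly p) = poly (pderiv p)"
  by (rule ext, rule DERIV_imp_deriv, rule poly_DERIV)

lemma funpow_deriv_poly: "(deriv ^^ k) (poly p) = poly ((pderiv ^^ k) p)"
  by (induction k) (simp_all add: deriv_poly)

definition legendre_poly :: "nat \<Rightarrow> real poly" where
  "legendre_poly l = smult (1 / (2 ^ l * fact l)) ((pderiv ^^ l) ([:-1, 0, 1:] ^ l))"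

lemma assoc_legendre_zero: "assoc_legendre l 0 = poly (legendre_poly l)"
proof -
  have rodrigues_poly: "(\<lambda>t::real. (t\<^sup>2 - 1) ^ l) = poly ([:-1, 0, 1:] ^ l)"
    by (rule ext) (simp add: poly_power power2_eq_square algebra_simps)
  show ?thesis
    unfolding assoc_legendre_def legendre_poly_def rodrigues_poly funpow_deriv_poly
    by (simp add: fun_eq_iff)
qed

lemma sph_Y_zero:
  "sph_Y l 0 \<theta> \<phi> = of_real (sqrt ((2 * real l + 1) / (4 * pi)) * poly (legendre_poly l) (cos \<theta>))"
  by (simp add: sph_Y_def assoc_legendre_zero)

lemma vector_derivative_sph_Y_zero:
  "vector_derivative (\<lambda>t. sph_Y l 0 t \<phi>) (at \<theta>)
     = of_real (sqrt ((2 * real l + 1) / (4 * pi)) * (poly (pderiv (legendre_poly l)) (cos \<theta>) * - sin \<theta>))"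
  unfolding sph_Y_zero
  by (intro vector_derivative_at has_vector_derivative_of_real DERIV_cmult
      DERIV_chain2[OF poly_DERIV] DERIV_cos)

lemma cdot_nu_zero_e_z:
  "cdot (nu l 0 \<theta> \<phi>) e_z = of_real (sqrt ((2 * real l + 1) / (4 * pi))
     * (- real (l + 1) * cos \<theta> * poly (legendre_poly l) (cos \<theta>)
        + (sin \<theta>)\<^sup>2 * poly (pderiv (legendre_poly l)) (cos \<theta>)))"
  by (simp add: cdot_def nu_def sum_3 e_z_def cvec_def vector_derivative_sph_Y_zero
      e_R_def e_theta_def e_phi_def)
    (simp add: sph_Y_zero power2_eq_square algebra_simps)

lemma abs_le_sphR: "\<bar>rC\<bar> \<le> sphR rC x y"
  unfolding sphR_def by (subst real_sqrt_abs[symmetric], rule real_sqrt_le_mono) simp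

lemma cos_sphTheta:
  assumes "rC > 0"
  shows "cos (sphTheta rC x y) = rC / sphR rC x y"
  using abs_le_sphR[of rC x y] assms unfolding sphTheta_def
  by (intro cos_arccos) (auto simp: field_simps)

lemma sin_sphTheta_squared:
  assumes "rC > 0"
  shows "(sin (sphTheta rC x y))\<^sup>2 = (x\<^sup>2 + y\<^sup>2) / (sphR rC x y)\<^sup>2"
proof -
  have R2: "(sphR rC x y)\<^sup>2 = x\<^sup>2 + y\<^sup>2 + rC\<^sup>2"
    unfolding sphR_def by simp
  have "x\<^sup>2 + y\<^sup>2 + rC\<^sup>2 > 0"
    using assms by (simp add: add_nonneg_pos)
  then show ?thesis
    by (simp add: sin_squared_eq cos_sphTheta assms power_divide R2 field_simps)
qed

definition disk_flux_density :: "real \<Rightarrow> nat \<Rightarrow> real \<Rightarrow> real" where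
  "disk_flux_density rC l \<rho> =
     (let R = sqrt (\<rho>\<^sup>2 + rC\<^sup>2) in
      sqrt ((2 * real l + 1) / (4 * pi))
        * (- real (l + 1) * (rC / R) * poly (legendre_poly l) (rC / R)
           + (\<rho> / R)\<^sup>2 * poly (pderiv (legendre_poly l)) (rC / R)) / R ^ (l + 2))"

lemma flux_integrand_eq_disk_flux_density:
  assumes "rC > 0"
  shows "cdot (nu l 0 (sphTheta rC x y) (sphPhi x y)) e_z / of_real (sphR rC x y ^ (l + 2))
       = of_real (disk_flux_density rC l (norm (x, y)))"
proof -
  have R: "sphR rC x y = sqrt ((norm (x, y))\<^sup>2 + rC\<^sup>2)"
    by (simp add: sphR_def norm_Pair)
  have "(sin (sphTheta rC x y))\<^sup>2 = (norm (x, y) / sphR rC x y)\<^sup>2"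
    by (simp add: sin_sphTheta_squared assms norm_Pair power_divide)
  then show ?thesis
    unfolding cdot_nu_zero_e_z cos_sphTheta[OF assms] disk_flux_density_def Let_def R
    by (simp only: of_real_divide)
qed

lemma continuous_on_disk_flux_density:
  assumes "rC > 0"
  shows "continuous_on UNIV (disk_flux_density rC l)"
proof -
  have "sqrt (\<rho>\<^sup>2 + rC\<^sup>2) \<noteq> 0" for \<rho>
    using assms by (simp add: add_nonneg_pos)
  then show ?thesis
    unfolding disk_flux_density_def Let_def by (intro continuous_intros) auto
qed

lemma gam_eq_integral_poly:
  assumes "rC > 0"
  shows "gam d rC a b u v = integral {0..d} (\<lambda>\<zeta>. \<zeta> ^ a / sqrt (\<zeta>\<^sup>2 + rC\<^sup>2) ^ b
           * poly ((pderiv ^^ u) (legendre_poly v)) (rC / sqrt (\<zeta>\<^sup>2 + rC\<^sup>2)))"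
proof -
  have "s powr (real b / 2) = sqrt s ^ b" if "s > 0" for s :: real
    using that by (simp add: powr_half_sqrt_powr powr_realpow real_sqrt_power)
  then show ?thesis
    using assms unfolding gam_def assoc_legendre_zero funpow_deriv_poly
    by (simp add: add_nonneg_pos)
qed

lemma has_integral_disk_flux_density:
  assumes "rC > 0"
  shows "((\<lambda>\<rho>. \<rho> * disk_flux_density rC l \<rho>) has_integral
           sqrt ((2 * real l + 1) / (4 * pi))
           * (- real (l + 1) * rC * gam d rC 1 (l + 3) 0 l + gam d rC 3 (l + 4) 1 l)) {0..d}"
proof -
  define R where "R \<rho> = sqrt (\<rho>\<^sup>2 + rC\<^sup>2)" for \<rho>
  have R_nonzero: "R \<rho> \<noteq> 0" for \<rho>
    unfolding R_def using assms by (simp add: add_nonneg_pos)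
  define k1 where "k1 \<rho> = \<rho> ^ 1 / R \<rho> ^ (l + 3) * poly (legendre_poly l) (rC / R \<rho>)" for \<rho>
  define k3 where "k3 \<rho> = \<rho> ^ 3 / R \<rho> ^ (l + 4) * poly (pderiv (legendre_poly l)) (rC / R \<rho>)" for \<rho>
  have "continuous_on UNIV R"
    unfolding R_def by (intro continuous_intros)
  then have "(k1 has_integral gam d rC 1 (l + 3) 0 l) {0..d}"
    and "(k3 has_integral gam d rC 3 (l + 4) 1 l) {0..d}"
    using R_nonzero unfolding gam_eq_integral_poly[OF assms] k1_def k3_def R_def[symmetric]
    by (auto intro!: integrable_integral integrable_continuous_interval continuous_intros
        intro: continuous_on_subset)
  then have "((\<lambda>\<rho>. sqrt ((2 * real l + 1) / (4 * pi)) * (- real (l + 1) * rC * k1 \<rho> + k3 \<rho>))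
      has_integral sqrt ((2 * real l + 1) / (4 * pi))
        * (- real (l + 1) * rC * gam d rC 1 (l + 3) 0 l + gam d rC 3 (l + 4) 1 l)) {0..d}"
    by (intro has_integral_mult_right has_integral_add has_integral_mult_right)
  moreover have "\<rho> * disk_flux_density rC l \<rho>
      = sqrt ((2 * real l + 1) / (4 * pi)) * (- real (l + 1) * rC * k1 \<rho> + k3 \<rho>)" for \<rho>
    unfolding disk_flux_density_def Let_def R_def[symmetric] k1_def k3_def
    using R_nonzero[of \<rho>] by (simp add: field_simps power_add eval_nat_numeral)
  ultimately show ?thesis
    by simp
qed

theorem mainTheorem3:
  fixes d rC :: real and l :: nat
  assumes "d > 0" and "rC > 0" and "l \<ge> 1"
  shows "integral {p :: real \<times> real. (fst p)\<^sup>2 + (snd p)\<^sup>2 \<le> d\<^sup>2}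
           (\<lambda>p. cdot (nu l 0 (sphTheta rC (fst p) (snd p)) (sphPhi (fst p) (snd p))) e_z
                 / complex_of_real (sphR rC (fst p) (snd p) ^ (l + 2)))
         = complex_of_real (2 * pi * sqrt ((2 * real l + 1) / (4 * pi))
             * (- real (l + 1) * rC * gam d rC 1 (l + 3) 0 l + gam d rC 3 (l + 4) 1 l))"
proof -
  let ?V = "sqrt ((2 * real l + 1) / (4 * pi))
    * (- real (l + 1) * rC * gam d rC 1 (l + 3) 0 l + gam d rC 3 (l + 4) 1 l)"
  have disk: "{p :: real \<times> real. (fst p)\<^sup>2 + (snd p)\<^sup>2 \<le> d\<^sup>2} = cball 0 d"
    using \<open>d > 0\<close> by (auto simp: norm_Pair real_le_lsqrt dest: sqrt_le_D)
  have integrand: "(\<lambda>p. cdot (nu l 0 (sphTheta rC (fst p) (snd p)) (sphPhi (fst p) (snd p))) e_z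
                 / complex_of_real (sphR rC (fst p) (snd p) ^ (l + 2)))
      = (\<lambda>p. complex_of_real (disk_flux_density rC l (norm p)))"
    using flux_integrand_eq_disk_flux_density[OF \<open>rC > 0\<close>] by auto
  have "continuous_on UNIV (\<lambda>\<rho>. complex_of_real (disk_flux_density rC l \<rho>))"
    using continuous_on_disk_flux_density[OF \<open>rC > 0\<close>] by (intro continuous_intros)
  then have "integral (cball (0::real \<times> real) d) (\<lambda>p. complex_of_real (disk_flux_density rC l (norm p)))
      = (2 * pi) *\<^sub>R integral {0..d} (\<lambda>\<rho>. \<rho> *\<^sub>R complex_of_real (disk_flux_density rC l \<rho>))"
    by (rule integral_cball_radial[OF \<open>d > 0\<close>])
  also have "\<dots> = (2 * pi) *\<^sub>R complex_of_real ?V"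
    using has_integral_of_real[OF has_integral_disk_flux_density[OF \<open>rC > 0\<close>], where 'b=complex]
    by (simp add: scaleR_conv_of_real integral_unique)
  finally show ?thesis
    unfolding disk integrand by (simp add: scaleR_conv_of_real mult.assoc)
qed

end
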